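(* For every $v\in\mathbb R$ we have $|\partial^+\Lambda(v)|\le1$ and $|\partial^-\Lambda(v)|\le1$, and for $v>0$ also $\partial^+\Lambda(v)\ge0$ and $\partial^-\Lambda(v)\ge0$.
   Context: Model: Let $G$ be a probability measure on $[0,\infty)$. In $\mathbb Z^2$, every vertical edge receives weight $1$ and every horizontal edge receives an independent random weight with law $G$. Passage time $T(p)$ of a nearest-neighbour path is the sum of the weights of its edges; $T(u,w)=\inf_pT(p)$ over paths from $u$ to $w$. For $v\ge0$, $\Lambda(v)=\lim_n\frac1nT((0,0),(n,\lceil vn\rceil))$ exists a.s., is deterministic and convex; it is extended to $\mathbb R$ by $\Lambda(-v)=\Lambda(v)$, yielding a convex function on $\mathbb R$. One-sided derivatives: $\partial^+\Lambda(v)=\lim_{w\searrow v}\frac{\Lambda(w)-\Lambda(v)}{w-v}$, $\partial^-\Lambda(v)=\lim_{w\nearrow v}\frac{\Lambda(v)-\Lambda(w)}{v-w}$. *)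

theory Defs
  imports "HOL-Probability.Probability"
begin

text \<open>The horizontal edge between (x,y) and
(x+1,y) is indexed by its left endpoint (x,y); an environment is a function
omega :: int \<times> int \<Rightarrow> real giving the weights of the horizontal edges.\<close>

definition nn :: "int \<times> int \<Rightarrow> int \<times> int \<Rightarrow> bool" where
  "nn a b \<longleftrightarrow> \<bar>fst a - fst b\<bar> + \<bar>snd a - snd b\<bar> = 1"

definition edge_wt :: "(int \<times> int \<Rightarrow> real) \<Rightarrow> int \<times> int \<Rightarrow> int \<times> int \<Rightarrow> real" where
  "edge_wt \<omega> a b = (if fst a = fst b then 1 else \<omega> (min (fst a) (fst b), snd a))"

definition nn_path :: "(int \<times> int) list \<Rightarrow> bool" where
  "nn_path p \<longleftrightarrow> p \<noteq> [] \<and> (\<forall>i. Suc i < length p \<longrightarrow> nn (p ! i) (p ! Suc i))"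

definition path_time :: "(int \<times> int \<Rightarrow> real) \<Rightarrow> (int \<times> int) list \<Rightarrow> real" where
  "path_time \<omega> p = (\<Sum>i<length p - 1. edge_wt \<omega> (p ! i) (p ! Suc i))"

definition passage_time :: "(int \<times> int \<Rightarrow> real) \<Rightarrow> int \<times> int \<Rightarrow> int \<times> int \<Rightarrow> real" where
  "passage_time \<omega> u w =
     (INF p \<in> {p. nn_path p \<and> hd p = u \<and> last p = w}. path_time \<omega> p)"

definition right_deriv :: "(real \<Rightarrow> real) \<Rightarrow> real \<Rightarrow> real" where
  "right_deriv f v = Lim (at_right v) (\<lambda>w. (f w - f v) / (w - v))"

definition left_deriv :: "(real \<Rightarrow> real) \<Rightarrow> real \<Rightarrow> real" where
  "left_deriv f v = Lim (at_left v) (\<lambda>w. (f v - f w) / (v - w))"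

end

theory Submission
  imports Defs
begin

text \<open>Vertical steps cost 1, so moving the endpoint (n, a) of a passage time to (n, b) changes it
by at most |a - b|; dividing by n gives |\<Lambda> v - \<Lambda> w| \<le> |v - w| for v, w \<ge> 0.
For u = l v + (1 - l) s w with s = 1 or s = -1, a path to (n, \<lceil>u n\<rceil>) can be routed through
(k, \<lceil>v k\<rceil>) with k = \<lfloor>l n\<rfloor>, and the second leg is the image of a path to
(n - k, \<lceil>w (n - k)\<rceil>) under a translation composed with y \<mapsto> s y, which preserves the law
of the environment. The second leg is thus only known in distribution, but that suffices to
compare almost sure limits, giving \<Lambda> u \<le> l \<Lambda> v + (1 - l) \<Lambda> w. With s = 1 this is
convexity on [0, \<infinity>); with s = -1 and v = w it is \<Lambda> 0 \<le> \<Lambda> v, hence monotonicity there.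
By symmetry \<Lambda> is then convex and 1-Lipschitz on the whole line, so its one-sided difference
quotients are monotone and converge, to limits in [-1, 1] that are nonnegative where \<Lambda> is
nondecreasing.\<close>

section \<open>Lattice paths and passage times\<close>

lemma nn_path_Cons: "nn_path (a # p) \<longleftrightarrow> p = [] \<or> nn a (hd p) \<and> nn_path p"
  by (cases p) (auto simp: nn_path_def nth_Cons split: nat.splits)

lemma path_time_Cons:
  assumes "p \<noteq> []"
  shows "path_time \<omega> (a # p) = edge_wt \<omega> a (hd p) + path_time \<omega> p"
proof -
  obtain m where m: "length p = Suc m" using assms by (cases p) auto
  have "path_time \<omega> (a # p) = edge_wt \<omega> a (p ! 0) + (\<Sum>i<m. edge_wt \<omega> (p ! i) (p ! Suc i))"
    unfolding path_time_def by (simp add: m sum.lessThan_Suc_shift del: sum.lessThan_Suc)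
  then show ?thesis using assms by (simp add: path_time_def m hd_conv_nth)
qed

lemma path_time_singleton [simp]: "path_time \<omega> [a] = 0"
  by (simp add: path_time_def)

definition lattice_paths :: "int \<times> int \<Rightarrow> int \<times> int \<Rightarrow> (int \<times> int) list set" where
  "lattice_paths u w = {p. nn_path p \<and> hd p = u \<and> last p = w}"

lemma passage_time_eq_INF: "passage_time \<omega> u w = (INF p \<in> lattice_paths u w. path_time \<omega> p)"
  by (simp add: passage_time_def lattice_paths_def)

lemma singleton_in_lattice_paths: "[u] \<in> lattice_paths u u"
  by (simp add: lattice_paths_def nn_path_def)

lemma Cons_in_lattice_paths:
  assumes "nn a b" "p \<in> lattice_paths b w"
  shows "a # p \<in> lattice_paths a w"
  using assms by (auto simp: lattice_paths_def nn_path_Cons) (auto simp: nn_path_def)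

lemma lattice_paths_append:
  assumes "p \<in> lattice_paths u w" "q \<in> lattice_paths w z"
  shows "p @ tl q \<in> lattice_paths u z \<and> path_time \<omega> (p @ tl q) = path_time \<omega> p + path_time \<omega> q"
  using assms(1)
proof (induction p arbitrary: u)
  case Nil
  then show ?case by (simp add: lattice_paths_def nn_path_def)
next
  case (Cons a p)
  show ?case
  proof (cases "p = []")
    case True
    then have "a # tl q = q"
      using Cons.prems assms(2) by (cases q) (auto simp: lattice_paths_def nn_path_def)
    then show ?thesis using True Cons.prems assms(2) by (auto simp: lattice_paths_def)
  next
    case False
    then have "p \<in> lattice_paths (hd p) w" and step: "nn a (hd p)" and "a = u"
      using Cons.prems by (auto simp: lattice_paths_def nn_path_Cons)
    with Cons.IH have IH: "p @ tl q \<in> lattice_paths (hd p) z"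
        "path_time \<omega> (p @ tl q) = path_time \<omega> p + path_time \<omega> q" by blast+
    have "a # (p @ tl q) \<in> lattice_paths u z"
      using Cons_in_lattice_paths[OF step IH(1)] \<open>a = u\<close> by simp
    moreover have "path_time \<omega> (a # (p @ tl q)) = path_time \<omega> (a # p) + path_time \<omega> q"
      using False IH(2) by (simp add: path_time_Cons)
    ultimately show ?thesis by simp
  qed
qed

lemma ex_column_path: "\<exists>p \<in> lattice_paths (x, y) (x, y'). path_time \<omega> p = \<bar>real_of_int (y' - y)\<bar>"
proof (induction "nat \<bar>y' - y\<bar>" arbitrary: y)
  case 0
  then have "y' = y" by simp
  then show ?case using singleton_in_lattice_paths by force
next
  case (Suc k)
  define y1 where "y1 = y + sgn (y' - y)"
  have "k = nat \<bar>y' - y1\<bar>" using Suc.hyps by (auto simp: y1_def sgn_if)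
  then obtain p where p: "p \<in> lattice_paths (x, y1) (x, y')"
    and time: "path_time \<omega> p = \<bar>real_of_int (y' - y1)\<bar>" using Suc.hyps(1) by blast
  have step: "nn (x, y) (x, y1)" using Suc.hyps(2) by (auto simp: nn_def y1_def sgn_if)
  have "p \<noteq> []" "hd p = (x, y1)" using p by (auto simp: lattice_paths_def nn_path_def)
  then have "path_time \<omega> ((x, y) # p) = \<bar>real_of_int (y' - y)\<bar>"
    using time Suc.hyps(2) by (auto simp: path_time_Cons edge_wt_def y1_def sgn_if)
  then show ?case using Cons_in_lattice_paths[OF step p] by blast
qed

lemma row_lattice_paths_nonempty: "lattice_paths (x, y) (x', y) \<noteq> {}"
proof (induction "nat \<bar>x' - x\<bar>" arbitrary: x)
  case 0
  then have "x' = x" by simp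
  then show ?case using singleton_in_lattice_paths by blast
next
  case (Suc k)
  define x1 where "x1 = x + sgn (x' - x)"
  have "k = nat \<bar>x' - x1\<bar>" using Suc.hyps by (auto simp: x1_def sgn_if)
  then obtain p where "p \<in> lattice_paths (x1, y) (x', y)" using Suc.hyps(1) by blast
  moreover have "nn (x, y) (x1, y)" using Suc.hyps(2) by (auto simp: nn_def x1_def sgn_if)
  ultimately show ?case using Cons_in_lattice_paths by blast
qed

lemma lattice_paths_nonempty: "lattice_paths u w \<noteq> {}"
proof -
  have "lattice_paths u (fst w, snd u) \<noteq> {}" using row_lattice_paths_nonempty[of "fst u" "snd u" "fst w"] by simp
  then obtain p where p: "p \<in> lattice_paths u (fst w, snd u)" by blast
  obtain q where "q \<in> lattice_paths (fst w, snd u) w" using ex_column_path[of "fst w" "snd u" "snd w"] by auto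
  then show ?thesis using lattice_paths_append[OF p] by blast
qed

lemma path_time_nonneg: "\<forall>e. 0 \<le> \<omega> e \<Longrightarrow> 0 \<le> path_time \<omega> p"
  unfolding path_time_def edge_wt_def by (intro sum_nonneg) auto

lemma passage_time_le_path_time:
  assumes "\<forall>e. 0 \<le> \<omega> e" "p \<in> lattice_paths u w"
  shows "passage_time \<omega> u w \<le> path_time \<omega> p"
  unfolding passage_time_eq_INF using assms path_time_nonneg
  by (intro cINF_lower bdd_belowI[of _ 0]) auto

lemma passage_time_triangle:
  assumes nonneg: "\<forall>e. 0 \<le> \<omega> e"
  shows "passage_time \<omega> u z \<le> passage_time \<omega> u w + passage_time \<omega> w z"
proof -
  have "passage_time \<omega> u z - path_time \<omega> p \<le> passage_time \<omega> w z"
    if p: "p \<in> lattice_paths u w" for p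
  proof -
    have "passage_time \<omega> u z - path_time \<omega> p \<le> path_time \<omega> q" if "q \<in> lattice_paths w z" for q
      using lattice_paths_append[OF p that, of \<omega>] passage_time_le_path_time[OF nonneg, of "p @ tl q"]
      by fastforce
    then show ?thesis
      unfolding passage_time_eq_INF[of \<omega> w z] using lattice_paths_nonempty by (intro cINF_greatest)
  qed
  then have "passage_time \<omega> u z - passage_time \<omega> w z \<le> passage_time \<omega> u w"
    unfolding passage_time_eq_INF[of \<omega> u w] using lattice_paths_nonempty
    by (intro cINF_greatest) (auto simp: algebra_simps)
  then show ?thesis by simp
qed

lemma passage_time_column_step:
  assumes nonneg: "\<forall>e. 0 \<le> \<omega> e"
  shows "passage_time \<omega> u (x, y') \<le> passage_time \<omega> u (x, y) + \<bar>real_of_int (y' - y)\<bar>"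
proof -
  obtain p where "p \<in> lattice_paths (x, y) (x, y')" "path_time \<omega> p = \<bar>real_of_int (y' - y)\<bar>"
    using ex_column_path by blast
  then have "passage_time \<omega> (x, y) (x, y') \<le> \<bar>real_of_int (y' - y)\<bar>"
    using passage_time_le_path_time[OF nonneg] by metis
  then show ?thesis using passage_time_triangle[OF nonneg, of u "(x, y')" "(x, y)"] by simp
qed

lemma passage_time_relabel:
  assumes inverse: "\<And>a. \<phi> (\<psi> a) = a" "\<And>a. \<psi> (\<phi> a) = a"
    and nn_iff: "\<And>a b. nn (\<phi> a) (\<phi> b) \<longleftrightarrow> nn a b"
    and edge_wt_eq: "\<And>a b. edge_wt \<omega>' a b = edge_wt \<omega> (\<phi> a) (\<phi> b)"
  shows "passage_time \<omega>' u w = passage_time \<omega> (\<phi> u) (\<phi> w)"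
proof -
  have nn_\<psi>: "nn (\<psi> a) (\<psi> b) \<longleftrightarrow> nn a b" for a b using nn_iff[of "\<psi> a" "\<psi> b"] inverse by simp
  have time: "path_time \<omega>' p = path_time \<omega> (map \<phi> p)" for p
    unfolding path_time_def by (intro sum.cong) (auto simp: edge_wt_eq)
  have "map \<phi> ` lattice_paths u w = lattice_paths (\<phi> u) (\<phi> w)"
  proof
    show "map \<phi> ` lattice_paths u w \<subseteq> lattice_paths (\<phi> u) (\<phi> w)"
      by (auto simp: lattice_paths_def nn_path_def hd_map last_map nn_iff)
    have "map \<psi> q \<in> lattice_paths u w" if "q \<in> lattice_paths (\<phi> u) (\<phi> w)" for q
      using that by (auto simp: lattice_paths_def nn_path_def hd_map last_map nn_\<psi> inverse)
    moreover have "q = map \<phi> (map \<psi> q)" for q by (simp add: inverse map_idI)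
    ultimately show "lattice_paths (\<phi> u) (\<phi> w) \<subseteq> map \<phi> ` lattice_paths u w" by blast
  qed
  then show ?thesis by (simp add: passage_time_eq_INF time image_image[symmetric])
qed

definition translate_reflect :: "int \<Rightarrow> int \<Rightarrow> int \<Rightarrow> int \<times> int \<Rightarrow> int \<times> int" where
  "translate_reflect d e s a = (fst a + d, s * snd a + e)"

lemma passage_time_translate_reflect:
  assumes "\<bar>s\<bar> = 1"
  shows "passage_time (\<omega> \<circ> translate_reflect d e s) u w
    = passage_time \<omega> (translate_reflect d e s u) (translate_reflect d e s w)"
proof (rule passage_time_relabel)
  have s: "s * s = 1" using assms abs_mult_self_eq[of s] by simp
  show "translate_reflect d e s (translate_reflect (- d) (- s * e) s a) = a"
    and "translate_reflect (- d) (- s * e) s (translate_reflect d e s a) = a" for a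
    by (auto simp: translate_reflect_def algebra_simps s mult.assoc[symmetric])
  show "nn (translate_reflect d e s a) (translate_reflect d e s b) \<longleftrightarrow> nn a b" for a b
    using assms by (simp add: nn_def translate_reflect_def abs_mult right_diff_distrib[symmetric])
  show "edge_wt (\<omega> \<circ> translate_reflect d e s) a b
      = edge_wt \<omega> (translate_reflect d e s a) (translate_reflect d e s b)" for a b
    by (simp add: edge_wt_def translate_reflect_def min_add_distrib_left min_add_distrib_right)
qed

section \<open>Comparing almost sure limits through equidistributed sequences\<close>

context prob_space
begin

lemma eventually_prob_gt_of_AE_ex:
  assumes events: "\<And>N. {\<omega> \<in> space M. Q N \<omega>} \<in> events"
    and mono: "\<And>N N' \<omega>. N \<le> N' \<Longrightarrow> Q N \<omega> \<Longrightarrow> Q N' \<omega>"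
    and AE: "AE \<omega> in M. \<exists>N. Q N \<omega>" and "p < 1"
  shows "\<forall>\<^sub>F N in sequentially. p < prob {\<omega> \<in> space M. Q N \<omega>}"
proof -
  let ?A = "\<lambda>N. {\<omega> \<in> space M. Q N \<omega>}"
  have "incseq ?A" using mono by (auto simp: incseq_def)
  then have "(\<lambda>N. prob (?A N)) \<longlonglongrightarrow> prob (\<Union>N. ?A N)"
    using events by (intro finite_Lim_measure_incseq) auto
  moreover have "prob (\<Union>N. ?A N) = 1"
    using AE events by (subst prob_eq_1) (auto elim: AE_mp)
  ultimately show ?thesis using \<open>p < 1\<close> by (auto intro: order_tendstoD)
qed

lemma limit_le_add_of_identically_distributed:
  fixes X Y Z W :: "nat \<Rightarrow> 'a \<Rightarrow> real"
  assumes [measurable]: "\<And>n. X n \<in> borel_measurable M" "\<And>n. Y n \<in> borel_measurable M"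
      "\<And>n. Z n \<in> borel_measurable M" "\<And>n. W n \<in> borel_measurable M"
    and le: "AE \<omega> in M. \<forall>n. W n \<omega> \<le> X n \<omega> + Y n \<omega>"
    and same_law: "\<And>n t. prob {\<omega> \<in> space M. t < Y n \<omega>} = prob {\<omega> \<in> space M. t < Z n \<omega>}"
    and X: "AE \<omega> in M. (\<lambda>n. X n \<omega>) \<longlonglongrightarrow> a"
    and Z: "AE \<omega> in M. (\<lambda>n. Z n \<omega>) \<longlonglongrightarrow> b"
    and W: "AE \<omega> in M. (\<lambda>n. W n \<omega>) \<longlonglongrightarrow> c"
  shows "c \<le> a + b"
proof (rule ccontr)
  assume "\<not> c \<le> a + b"
  define e where "e = (c - a - b) / 3"
  have "0 < e" "c = a + b + 3 * e" using \<open>\<not> c \<le> a + b\<close> by (auto simp: e_def field_simps)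
  define t where "t = b + e"
  have Y_tail: "\<forall>\<^sub>F n in sequentially. t < Y n \<omega>" if "\<forall>n. W n \<omega> \<le> X n \<omega> + Y n \<omega>"
    "(\<lambda>n. X n \<omega>) \<longlonglongrightarrow> a" "(\<lambda>n. W n \<omega>) \<longlonglongrightarrow> c" for \<omega>
  proof -
    have "\<forall>\<^sub>F n in sequentially. X n \<omega> < a + e \<and> c - e < W n \<omega>"
      using that(2,3) \<open>0 < e\<close> by (intro eventually_conj order_tendstoD) auto
    then show ?thesis
    proof (rule eventually_mono)
      fix n
      assume "X n \<omega> < a + e \<and> c - e < W n \<omega>"
      then show "t < Y n \<omega>"
        using that(1)[rule_format, of n] \<open>c = a + b + 3 * e\<close> unfolding t_def by linarith
    qed
  qed
  have "AE \<omega> in M. \<exists>N. \<forall>n\<ge>N. t < Y n \<omega>"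
    using le X W by eventually_elim (use Y_tail in \<open>simp add: eventually_sequentially\<close>)
  then have Y_large: "\<forall>\<^sub>F N in sequentially. 1/2 < prob {\<omega> \<in> space M. \<forall>n\<ge>N. t < Y n \<omega>}"
    by (intro eventually_prob_gt_of_AE_ex) auto
  have "b < t" using \<open>0 < e\<close> by (simp add: t_def)
  have "AE \<omega> in M. \<exists>N. \<forall>n\<ge>N. Z n \<omega> < t"
    using Z
  proof eventually_elim
    case (elim \<omega>)
    show ?case using order_tendstoD(2)[OF elim \<open>b < t\<close>] by (simp add: eventually_sequentially)
  qed
  then have Z_small: "\<forall>\<^sub>F N in sequentially. 1/2 < prob {\<omega> \<in> space M. \<forall>n\<ge>N. Z n \<omega> < t}"
    by (intro eventually_prob_gt_of_AE_ex) auto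
  obtain N where N: "1/2 < prob {\<omega> \<in> space M. \<forall>n\<ge>N. t < Y n \<omega>}"
      "1/2 < prob {\<omega> \<in> space M. \<forall>n\<ge>N. Z n \<omega> < t}"
    using eventually_happens[OF eventually_conj[OF Y_large Z_small]] by auto
  have "prob {\<omega> \<in> space M. \<forall>n\<ge>N. t < Y n \<omega>} \<le> prob {\<omega> \<in> space M. t < Y N \<omega>}"
    by (rule finite_measure_mono) auto
  also have "\<dots> = prob {\<omega> \<in> space M. t < Z N \<omega>}" by (rule same_law)
  also have "\<dots> \<le> prob (space M - {\<omega> \<in> space M. \<forall>n\<ge>N. Z n \<omega> < t})"
    by (rule finite_measure_mono) auto
  also have "\<dots> = 1 - prob {\<omega> \<in> space M. \<forall>n\<ge>N. Z n \<omega> < t}"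
    by (rule prob_compl) measurable
  finally show False using N by simp
qed

lemma AE_imp_ex:
  assumes "AE x in M. P x"
  shows "\<exists>x. P x"
proof (rule ccontr)
  assume "\<nexists>x. P x"
  with assms have "AE x in M. False" by simp
  then show False by simp
qed

end

section \<open>I.i.d.\ horizontal weights\<close>

locale iid_weights =
  fixes G :: "real measure"
  assumes prob_space_G: "prob_space G" and sets_G: "sets G = sets borel"
    and weights_nonneg: "measure G {0..} = 1"
begin

abbreviation env :: "(int \<times> int \<Rightarrow> real) measure" where
  "env \<equiv> PiM UNIV (\<lambda>_. G)"

sublocale env: prob_space env
  by (rule prob_space_PiM) (simp add: prob_space_G)

lemma space_G: "space G = UNIV"
  using sets_eq_imp_space_eq[OF sets_G] by simp

lemma space_env: "space env = UNIV"
  by (simp add: space_PiM space_G)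

lemma AE_env_nonneg: "AE \<omega> in env. \<forall>e. 0 \<le> \<omega> e"
proof -
  interpret product_prob_space "\<lambda>_. G" "UNIV :: (int \<times> int) set"
    by (simp add: product_prob_space_def product_prob_space_axioms_def product_sigma_finite_def
        prob_space_G prob_space_imp_sigma_finite)
  have "{0..} \<in> sets G" by (simp add: sets_G)
  then have "AE x in G. x \<in> {0..}"
    using prob_space.AE_in_set_eq_1[OF prob_space_G] weights_nonneg by blast
  then have "AE \<omega> in env. 0 \<le> \<omega> e" for e by (intro AE_component) auto
  then show ?thesis by (subst AE_all_countable) auto
qed

lemma measurable_passage_time [measurable]: "(\<lambda>\<omega>. passage_time \<omega> u w) \<in> borel_measurable env"
proof -
  have "(\<lambda>\<omega>. \<omega> e) \<in> env \<rightarrow>\<^sub>M G" for e by (rule measurable_component_singleton) simp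
  then have "(\<lambda>\<omega>. \<omega> e) \<in> borel_measurable env" for e
    using measurable_cong_sets[OF refl sets_G] by blast
  then have "(\<lambda>\<omega>. path_time \<omega> p) \<in> borel_measurable env" for p
    unfolding path_time_def edge_wt_def by measurable
  then show ?thesis
    unfolding passage_time_eq_INF by (intro borel_measurable_cINF_real countableI_type)
qed

lemma distr_translate_reflect:
  assumes "\<bar>s\<bar> = 1"
  shows "distr env env (\<lambda>\<omega>. \<omega> \<circ> translate_reflect d e s) = env"
proof -
  have "inj (translate_reflect d e s)"
    using assms by (auto simp: inj_def translate_reflect_def abs_eq_iff)
  then show ?thesis
    using distr_PiM_reindex[of UNIV "\<lambda>_. G" "translate_reflect d e s" UNIV] prob_space_G
    by (simp add: restrict_UNIV comp_def)
qed

lemma prob_passage_time_translate_reflect: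
  assumes "\<bar>s\<bar> = 1"
  shows "env.prob {\<omega> \<in> space env.
            t < passage_time \<omega> (translate_reflect d e s u) (translate_reflect d e s w) / c}
       = env.prob {\<omega> \<in> space env. t < passage_time \<omega> u w / c}"
proof -
  let ?A = "{\<omega> \<in> space env. t < passage_time \<omega> u w / c}"
  have "(\<lambda>\<omega>. \<omega> \<circ> translate_reflect d e s) \<in> env \<rightarrow>\<^sub>M env"
    by (rule measurable_PiM_single') (auto simp: space_env space_G measurable_component_singleton)
  moreover have "?A \<in> sets env" by measurable
  ultimately have "env.prob ((\<lambda>\<omega>. \<omega> \<circ> translate_reflect d e s) -` ?A \<inter> space env)
      = measure (distr env env (\<lambda>\<omega>. \<omega> \<circ> translate_reflect d e s)) ?A"
    by (rule measure_distr[symmetric])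
  then show ?thesis
    by (simp add: distr_translate_reflect[OF assms] passage_time_translate_reflect[OF assms]
        space_env vimage_def)
qed

end

lemma abs_ceiling_diff_le: "\<bar>real_of_int (\<lceil>x\<rceil> - \<lceil>y\<rceil>)\<bar> \<le> \<bar>x - y\<bar> + 1"
proof -
  have "x \<le> \<lceil>x\<rceil>" "\<lceil>x\<rceil> < x + 1" "y \<le> \<lceil>y\<rceil>" "\<lceil>y\<rceil> < y + 1" by linarith+
  then show ?thesis by arith
qed

lemma ceiling_split_bound:
  fixes k k' n :: nat and s :: int and l v w :: real
  assumes "k + k' = n" "real k \<le> l * n" "l * n < real k + 1"
    and "0 \<le> v" "0 \<le> w" "\<bar>s\<bar> = 1"
  shows "\<bar>real_of_int (\<lceil>(l * v + (1 - l) * s * w) * n\<rceil> - (\<lceil>v * k\<rceil> + s * \<lceil>w * k'\<rceil>))\<bar> \<le> v + w + 3"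
proof -
  define u where "u = l * v + (1 - l) * s * w"
  have k': "real k' = n - real k" using assms(1) by auto
  have v_k: "v * k \<le> v * (l * n)" "v * (l * n) \<le> v * k + v"
    using assms(2-4) mult_left_mono[of "l * n" "real k + 1" v]
    by (auto simp: distrib_left intro: mult_left_mono)
  have w_k': "w * (n - l * n) \<le> w * k'" "w * k' \<le> w * (n - l * n) + w"
    using assms(2,3,5) k' mult_left_mono[of "real k'" "n - l * n + 1" w]
    by (auto simp: distrib_left intro: mult_left_mono)
  have u_n: "u * n = v * (l * n) + s * (w * (n - l * n))"
    by (simp add: u_def algebra_simps)
  have "u * n \<le> \<lceil>u * n\<rceil>" "\<lceil>u * n\<rceil> < u * n + 1" "v * k \<le> \<lceil>v * k\<rceil>" "\<lceil>v * k\<rceil> < v * k + 1"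
    "w * k' \<le> \<lceil>w * k'\<rceil>" "\<lceil>w * k'\<rceil> < w * k' + 1" by linarith+
  moreover have "s = 1 \<or> s = -1" using assms(6) by auto
  ultimately show ?thesis
    using v_k w_k' u_n assms(4,5) unfolding u_def[symmetric] by (auto simp: abs_le_iff) linarith+
qed

lemma tendsto_rescaled_reindex:
  fixes h :: "nat \<Rightarrow> real" and m :: "nat \<Rightarrow> nat"
  assumes h: "(\<lambda>n. h n / real n) \<longlonglongrightarrow> L"
    and m: "(\<lambda>n. real (m n) / real n) \<longlonglongrightarrow> r" and "0 < r"
  shows "(\<lambda>n. h (m n) / real n) \<longlonglongrightarrow> L * r"
proof -
  have "filterlim (\<lambda>n. real (m n) / real n * real n) at_top sequentially"
    using filterlim_tendsto_pos_mult_at_top[OF m \<open>0 < r\<close> filterlim_real_sequentially] .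
  also have "?this \<longleftrightarrow> filterlim m sequentially sequentially"
    unfolding filterlim_sequentially_iff_filterlim_real
    by (intro filterlim_cong refl eventually_mono[OF eventually_gt_at_top[of 0]]) auto
  finally have m_top: "filterlim m sequentially sequentially" .
  then have m_pos: "\<forall>\<^sub>F n in sequentially. 1 \<le> m n" by (simp add: filterlim_at_top)
  from m_top have "(\<lambda>n. h (m n) / real (m n)) \<longlonglongrightarrow> L"
    using filterlim_compose[OF h] by blast
  then have "(\<lambda>n. h (m n) / real (m n) * (real (m n) / real n)) \<longlonglongrightarrow> L * r"
    by (intro tendsto_mult m)
  moreover have "\<forall>\<^sub>F n in sequentially. h (m n) / real (m n) * (real (m n) / real n) = h (m n) / real n"
    using m_pos by eventually_elim simp
  ultimately show ?thesis by (rule Lim_transform_eventually)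
qed

lemma nat_floor_bounds:
  fixes x :: real
  assumes "0 \<le> x"
  shows "x - 1 < real (nat \<lfloor>x\<rfloor>)" "real (nat \<lfloor>x\<rfloor>) \<le> x"
proof -
  have "real (nat \<lfloor>x\<rfloor>) = \<lfloor>x\<rfloor>" using assms by simp
  then show "x - 1 < real (nat \<lfloor>x\<rfloor>)" "real (nat \<lfloor>x\<rfloor>) \<le> x" by linarith+
qed

lemma tendsto_nat_floor_mult_div:
  fixes l :: real
  assumes "0 \<le> l"
  shows "(\<lambda>n. real (nat \<lfloor>l * n\<rfloor>) / real n) \<longlonglongrightarrow> l"
proof (rule tendsto_sandwich[of "\<lambda>n. l - 1 / real n" _ _ "\<lambda>n. l"])
  show "\<forall>\<^sub>F n in sequentially. l - 1 / real n \<le> real (nat \<lfloor>l * n\<rfloor>) / real n"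
    using eventually_gt_at_top[of 0]
  proof eventually_elim
    case (elim n)
    then have "l - 1 / real n = (l * n - 1) / n" by (simp add: field_simps)
    also have "\<dots> \<le> real (nat \<lfloor>l * n\<rfloor>) / n"
      using nat_floor_bounds(1)[of "l * n"] assms by (intro divide_right_mono) auto
    finally show ?case .
  qed
  show "\<forall>\<^sub>F n in sequentially. real (nat \<lfloor>l * n\<rfloor>) / real n \<le> l"
    using eventually_gt_at_top[of 0]
    by eventually_elim (use nat_floor_bounds(2)[of "l * _"] assms in \<open>simp add: field_simps\<close>)
  show "(\<lambda>n. l - 1 / real n) \<longlonglongrightarrow> l"
    using tendsto_diff[OF tendsto_const lim_inverse_n', of l] by simp
qed simp

lemma nat_floor_mult_le:
  fixes l :: real
  assumes "0 \<le> l" "l \<le> 1"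
  shows "nat \<lfloor>l * n\<rfloor> \<le> n"
proof -
  have "real (nat \<lfloor>l * n\<rfloor>) \<le> l * n" using assms by (intro nat_floor_bounds(2)) simp
  also have "\<dots> \<le> n" using assms by (simp add: mult_left_le_one_le)
  finally show ?thesis by (simp only: of_nat_le_iff)
qed

lemma tendsto_diff_nat_floor_mult_div:
  fixes l :: real
  assumes "0 \<le> l" "l \<le> 1"
  shows "(\<lambda>n. real (n - nat \<lfloor>l * n\<rfloor>) / real n) \<longlonglongrightarrow> 1 - l"
proof -
  have ratio: "real (n - nat \<lfloor>l * n\<rfloor>) / n = 1 - real (nat \<lfloor>l * n\<rfloor>) / n"
    if "0 < n" for n :: nat
    using that nat_floor_mult_le[OF assms, of n] by (simp add: of_nat_diff field_simps)
  have "\<forall>\<^sub>F n in sequentially. 1 - real (nat \<lfloor>l * n\<rfloor>) / n = real (n - nat \<lfloor>l * n\<rfloor>) / n"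
    using eventually_gt_at_top[of 0] by (rule eventually_mono) (simp add: ratio)
  with tendsto_diff[OF tendsto_const tendsto_nat_floor_mult_div[OF assms(1)]]
  show ?thesis by (rule Lim_transform_eventually)
qed

section \<open>Convex functions on the real line\<close>

lemma mono_on_atLeast_if_convex_on:
  fixes f :: "real \<Rightarrow> real"
  assumes convex: "convex_on {a..} f" and min: "\<And>y. a \<le> y \<Longrightarrow> f a \<le> f y"
  shows "mono_on {a..} f"
proof (rule mono_onI)
  fix x y assume "x \<in> {a..}" "y \<in> {a..}" "x \<le> y"
  show "f x \<le> f y"
  proof (cases "x = a")
    case False
    with \<open>x \<in> {a..}\<close> \<open>x \<le> y\<close> have "a < y" by simp
    define t where "t = (x - a) / (y - a)"
    have t: "0 \<le> t" "t \<le> 1" using \<open>x \<in> {a..}\<close> \<open>x \<le> y\<close> \<open>a < y\<close> by (auto simp: t_def)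
    have "t * (y - a) = x - a" using \<open>a < y\<close> by (simp add: t_def)
    then have "x = (1 - t) *\<^sub>R a + t *\<^sub>R y" by (simp add: algebra_simps)
    then have "f x \<le> (1 - t) * f a + t * f y"
      using convex_onD[OF convex t] \<open>y \<in> {a..}\<close> by simp
    also have "\<dots> \<le> (1 - t) * f y + t * f y"
      using min[of y] \<open>a < y\<close> t by (intro add_right_mono mult_left_mono) auto
    finally show ?thesis by (simp add: algebra_simps)
  qed (use min \<open>y \<in> {a..}\<close> in simp)
qed

lemma convex_on_UNIV_if_even:
  fixes f :: "real \<Rightarrow> real"
  assumes even: "\<And>x. f (- x) = f x" and convex: "convex_on {0..} f" and mono: "mono_on {0..} f"
  shows "convex_on UNIV f"
proof (rule convex_onI)
  have f_abs: "f x = f \<bar>x\<bar>" for x using even[of x] by (cases "0 \<le> x") auto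
  fix t x y :: real assume t: "0 < t" "t < 1"
  have "f ((1 - t) *\<^sub>R x + t *\<^sub>R y) = f \<bar>(1 - t) * x + t * y\<bar>" using f_abs by simp
  also have "\<dots> \<le> f ((1 - t) * \<bar>x\<bar> + t * \<bar>y\<bar>)"
    using t abs_triangle_ineq[of "(1 - t) * x" "t * y"]
    by (intro mono_onD[OF mono]) (auto simp: abs_mult)
  also have "\<dots> \<le> (1 - t) * f \<bar>x\<bar> + t * f \<bar>y\<bar>"
    using convex_onD[OF convex, of t "\<bar>x\<bar>" "\<bar>y\<bar>"] t by simp
  finally show "f ((1 - t) *\<^sub>R x + t *\<^sub>R y) \<le> (1 - t) * f x + t * f y"
    using f_abs[of x] f_abs[of y] by simp
qed simp

lemma abs_diff_le_if_even:
  fixes f :: "real \<Rightarrow> real"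
  assumes even: "\<And>x. f (- x) = f x"
    and lipschitz: "\<And>x y. 0 \<le> x \<Longrightarrow> 0 \<le> y \<Longrightarrow> f x \<le> f y + \<bar>x - y\<bar>"
  shows "\<bar>f x - f y\<bar> \<le> \<bar>x - y\<bar>"
proof -
  have f_abs: "f x = f \<bar>x\<bar>" for x using even[of x] by (cases "0 \<le> x") auto
  have "\<bar>f \<bar>x\<bar> - f \<bar>y\<bar>\<bar> \<le> \<bar>\<bar>x\<bar> - \<bar>y\<bar>\<bar>"
    using lipschitz[of "\<bar>x\<bar>" "\<bar>y\<bar>"] lipschitz[of "\<bar>y\<bar>" "\<bar>x\<bar>"] by (simp add: abs_le_iff abs_minus_commute)
  also have "\<dots> \<le> \<bar>x - y\<bar>" by (rule abs_triangle_ineq3)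
  finally show ?thesis using f_abs[of x] f_abs[of y] by simp
qed

lemma convex_on_right_deriv:
  fixes f :: "real \<Rightarrow> real"
  assumes convex: "convex_on UNIV f"
  shows "((\<lambda>w. (f w - f v) / (w - v)) \<longlongrightarrow> right_deriv f v) (at_right v)"
proof -
  define q where "q = (\<lambda>w. (f w - f v) / (w - v))"
  have slope: "(f x - f y) / (x - y) = (f y - f x) / (y - x)" for x y :: real
    by (simp add: divide_simps) argo
  have "(q \<longlongrightarrow> Inf (q ` ({v<..} \<inter> UNIV))) (at v within {v<..} \<inter> UNIV)"
  proof (rule Lim_right_bound[where K = "f v - f (v - 1)"])
    fix a b assume "v < a" "a \<le> b"
    show "q a \<le> q b"
    proof (cases "a = b")
      case False
      then have "(f v - f a) / (v - a) \<le> (f v - f b) / (v - b)"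
        using convex_on_slope_le(1)[OF convex, of v b a] \<open>v < a\<close> \<open>a \<le> b\<close> by simp
      then show ?thesis using slope[of v a] slope[of v b] by (simp add: q_def)
    qed simp
  next
    fix a assume "v < a"
    have "f v - f (v - 1) = (f (v - 1) - f v) / ((v - 1) - v)" by simp
    also have "\<dots> \<le> (f (v - 1) - f a) / ((v - 1) - a)"
      using convex_on_slope_le(1)[OF convex, of "v - 1" a v] \<open>v < a\<close> by simp
    also have "\<dots> \<le> (f v - f a) / (v - a)"
      using convex_on_slope_le(2)[OF convex, of "v - 1" a v] \<open>v < a\<close> by simp
    finally show "f v - f (v - 1) \<le> q a" using slope[of v a] by (simp add: q_def)
  qed
  then have "(q \<longlongrightarrow> Inf (q ` {v<..})) (at_right v)" by simp
  moreover from this have "right_deriv f v = Inf (q ` {v<..})"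
    unfolding right_deriv_def q_def[symmetric] by (rule tendsto_Lim[OF trivial_limit_at_right_real])
  ultimately show ?thesis by (simp add: q_def)
qed

lemma convex_on_left_deriv:
  fixes f :: "real \<Rightarrow> real"
  assumes convex: "convex_on UNIV f"
  shows "((\<lambda>w. (f v - f w) / (v - w)) \<longlongrightarrow> left_deriv f v) (at_left v)"
proof -
  define q where "q = (\<lambda>w. (f v - f w) / (v - w))"
  have slope: "(f x - f y) / (x - y) = (f y - f x) / (y - x)" for x y :: real
    by (simp add: divide_simps) argo
  have "(q \<longlongrightarrow> Sup (q ` ({..<v} \<inter> UNIV))) (at v within {..<v} \<inter> UNIV)"
  proof (rule Lim_left_bound[where K = "f (v + 1) - f v"])
    fix a b assume "b < v" "a \<le> b"
    show "q a \<le> q b"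
    proof (cases "a = b")
      case False
      then have "(f a - f v) / (a - v) \<le> (f b - f v) / (b - v)"
        using convex_on_slope_le(2)[OF convex, of a v b] \<open>b < v\<close> \<open>a \<le> b\<close> by simp
      then show ?thesis using slope[of v a] slope[of v b] by (simp add: q_def)
    qed simp
  next
    fix a assume "a < v"
    have "(f a - f v) / (a - v) \<le> (f a - f (v + 1)) / (a - (v + 1))"
      using convex_on_slope_le(1)[OF convex, of a "v + 1" v] \<open>a < v\<close> by simp
    also have "\<dots> \<le> (f v - f (v + 1)) / (v - (v + 1))"
      using convex_on_slope_le(2)[OF convex, of a "v + 1" v] \<open>a < v\<close> by simp
    finally show "q a \<le> f (v + 1) - f v" using slope[of v a] by (simp add: q_def)
  qed
  then have "(q \<longlongrightarrow> Sup (q ` {..<v})) (at_left v)" by simp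
  moreover from this have "left_deriv f v = Sup (q ` {..<v})"
    unfolding left_deriv_def q_def[symmetric] by (rule tendsto_Lim[OF trivial_limit_at_left_real])
  ultimately show ?thesis by (simp add: q_def)
qed

lemma abs_right_deriv_le:
  fixes f :: "real \<Rightarrow> real"
  assumes convex: "convex_on UNIV f" and lipschitz: "\<And>x y. \<bar>f x - f y\<bar> \<le> L * \<bar>x - y\<bar>"
  shows "\<bar>right_deriv f v\<bar> \<le> L"
proof (rule tendsto_upperbound[OF tendsto_rabs[OF convex_on_right_deriv[OF convex]]])
  show "\<forall>\<^sub>F w in at_right v. \<bar>(f w - f v) / (w - v)\<bar> \<le> L"
    using eventually_at_right_less
  proof (rule eventually_mono)
    fix w assume "v < w"
    then show "\<bar>(f w - f v) / (w - v)\<bar> \<le> L" using lipschitz[of w v] by (simp add: abs_divide divide_le_eq)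
  qed
qed simp

lemma abs_left_deriv_le:
  fixes f :: "real \<Rightarrow> real"
  assumes convex: "convex_on UNIV f" and lipschitz: "\<And>x y. \<bar>f x - f y\<bar> \<le> L * \<bar>x - y\<bar>"
  shows "\<bar>left_deriv f v\<bar> \<le> L"
proof (rule tendsto_upperbound[OF tendsto_rabs[OF convex_on_left_deriv[OF convex]]])
  show "\<forall>\<^sub>F w in at_left v. \<bar>(f v - f w) / (v - w)\<bar> \<le> L"
    using eventually_at_left_real[of "v - 1" v]
  proof (rule eventually_mono)
    fix w assume "w \<in> {v - 1<..<v}"
    then show "\<bar>(f v - f w) / (v - w)\<bar> \<le> L" using lipschitz[of v w] by (simp add: abs_divide divide_le_eq)
  qed simp
qed simp

lemma right_deriv_nonneg:
  fixes f :: "real \<Rightarrow> real"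
  assumes convex: "convex_on UNIV f" and mono: "mono_on {a..} f" and "a \<le> v"
  shows "0 \<le> right_deriv f v"
proof (rule tendsto_lowerbound[OF convex_on_right_deriv[OF convex]])
  show "\<forall>\<^sub>F w in at_right v. 0 \<le> (f w - f v) / (w - v)"
    using eventually_at_right_less
    by (rule eventually_mono) (use mono_onD[OF mono] \<open>a \<le> v\<close> in simp)
qed simp

lemma left_deriv_nonneg:
  fixes f :: "real \<Rightarrow> real"
  assumes convex: "convex_on UNIV f" and mono: "mono_on {a..} f" and "a < v"
  shows "0 \<le> left_deriv f v"
proof (rule tendsto_lowerbound[OF convex_on_left_deriv[OF convex]])
  show "\<forall>\<^sub>F w in at_left v. 0 \<le> (f v - f w) / (v - w)"
    using eventually_at_left_real[OF \<open>a < v\<close>]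
    by (rule eventually_mono) (use mono_onD[OF mono] in simp)
qed simp

section \<open>The time constant\<close>

lemma passage_time_split_bound:
  fixes k k' n :: nat and s :: int and l v w :: real
  assumes nonneg: "\<forall>e. 0 \<le> \<omega> e" and split: "k + k' = n" "real k \<le> l * n" "l * n < real k + 1"
    and "0 \<le> v" "0 \<le> w" "\<bar>s\<bar> = 1"
  shows "passage_time \<omega> (0, 0) (int n, \<lceil>(l * v + (1 - l) * s * w) * n\<rceil>)
    \<le> passage_time \<omega> (0, 0) (int k, \<lceil>v * k\<rceil>)
      + passage_time \<omega> (translate_reflect k \<lceil>v * k\<rceil> s (0, 0))
          (translate_reflect k \<lceil>v * k\<rceil> s (int k', \<lceil>w * k'\<rceil>))
      + (v + w + 3)"
proof -
  let ?a = "(int k, \<lceil>v * k\<rceil>)" and ?y = "\<lceil>v * k\<rceil> + s * \<lceil>w * k'\<rceil>"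
  have "translate_reflect k \<lceil>v * k\<rceil> s (0, 0) = ?a"
    and "translate_reflect k \<lceil>v * k\<rceil> s (int k', \<lceil>w * k'\<rceil>) = (int n, ?y)"
    using split(1) by (auto simp: translate_reflect_def)
  moreover have "passage_time \<omega> (0, 0) (int n, \<lceil>(l * v + (1 - l) * s * w) * n\<rceil>)
      \<le> passage_time \<omega> (0, 0) (int n, ?y) + (v + w + 3)"
    using passage_time_column_step[OF nonneg] ceiling_split_bound[OF split assms(5-7)]
    by (smt (verit))
  moreover have "passage_time \<omega> (0, 0) (int n, ?y)
      \<le> passage_time \<omega> (0, 0) ?a + passage_time \<omega> ?a (int n, ?y)"
    by (rule passage_time_triangle[OF nonneg])
  ultimately show ?thesis by simp
qed

locale time_constant = iid_weights +
  fixes \<Lambda> :: "real \<Rightarrow> real"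
  assumes time_constant_limit: "\<And>v. 0 \<le> v \<Longrightarrow>
    AE \<omega> in PiM UNIV (\<lambda>_. G).
      (\<lambda>n. passage_time \<omega> (0, 0) (int n, \<lceil>v * real n\<rceil>) / real n) \<longlonglongrightarrow> \<Lambda> v"
begin

lemma time_constant_le_add_dist:
  assumes "0 \<le> v" "0 \<le> w"
  shows "\<Lambda> v \<le> \<Lambda> w + \<bar>v - w\<bar>"
proof -
  let ?T = "\<lambda>\<omega> v n. passage_time \<omega> (0, 0) (int n, \<lceil>v * real n\<rceil>)"
  \<comment> \<open>the limits are deterministic, so a single typical environment suffices\<close>
  have "AE \<omega> in env. (\<forall>e. 0 \<le> \<omega> e)
      \<and> (\<lambda>n. ?T \<omega> v n / n) \<longlonglongrightarrow> \<Lambda> v \<and> (\<lambda>n. ?T \<omega> w n / n) \<longlonglongrightarrow> \<Lambda> w"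
    using AE_env_nonneg time_constant_limit[OF assms(1)] time_constant_limit[OF assms(2)]
    by eventually_elim auto
  then obtain \<omega> where nonneg: "\<forall>e. 0 \<le> \<omega> e"
    and lim_v: "(\<lambda>n. ?T \<omega> v n / n) \<longlonglongrightarrow> \<Lambda> v" and lim_w: "(\<lambda>n. ?T \<omega> w n / n) \<longlonglongrightarrow> \<Lambda> w"
    using env.AE_imp_ex by blast
  have lim_upper: "(\<lambda>n. ?T \<omega> w n / n + (\<bar>v - w\<bar> + 1 / n)) \<longlonglongrightarrow> \<Lambda> w + (\<bar>v - w\<bar> + 0)"
    by (intro tendsto_add lim_w tendsto_const lim_inverse_n')
  have bound: "?T \<omega> v n / n \<le> ?T \<omega> w n / n + (\<bar>v - w\<bar> + 1 / n)" if "0 < n" for n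
  proof -
    have "\<bar>v * n - w * n\<bar> = \<bar>v - w\<bar> * n" by (simp add: abs_mult left_diff_distrib[symmetric])
    then have "?T \<omega> v n \<le> ?T \<omega> w n + (\<bar>v - w\<bar> * n + 1)"
      using passage_time_column_step[OF nonneg, of "(0, 0)" "int n" "\<lceil>v * n\<rceil>" "\<lceil>w * n\<rceil>"]
        abs_ceiling_diff_le[of "v * n" "w * n"] by linarith
    then have "?T \<omega> v n / n \<le> (?T \<omega> w n + (\<bar>v - w\<bar> * n + 1)) / n"
      by (rule divide_right_mono) simp
    also have "\<dots> = ?T \<omega> w n / n + (\<bar>v - w\<bar> + 1 / n)" using that by (simp add: field_simps)
    finally show ?thesis .
  qed
  have "\<forall>\<^sub>F n in sequentially. ?T \<omega> v n / n \<le> ?T \<omega> w n / n + (\<bar>v - w\<bar> + 1 / n)"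
    using eventually_gt_at_top[of 0] by (rule eventually_mono) (rule bound)
  from tendsto_le[OF trivial_limit_sequentially lim_upper lim_v this] show ?thesis by simp
qed

lemma time_constant_limit_reindex:
  assumes "0 \<le> v" "(\<lambda>n. real (m n) / n) \<longlonglongrightarrow> r" "0 < r"
  shows "AE \<omega> in env. (\<lambda>n. passage_time \<omega> (0, 0) (int (m n), \<lceil>v * m n\<rceil>) / n) \<longlonglongrightarrow> \<Lambda> v * r"
  using time_constant_limit[OF assms(1)]
proof eventually_elim
  case (elim \<omega>)
  show ?case using tendsto_rescaled_reindex[OF elim assms(2,3)] by simp
qed

lemma time_constant_convex_combination:
  fixes s :: int and l v w :: real
  assumes "0 \<le> v" "0 \<le> w" "\<bar>s\<bar> = 1" "0 < l" "l < 1"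
    and u_nonneg: "0 \<le> l * v + (1 - l) * s * w"
  shows "\<Lambda> (l * v + (1 - l) * s * w) \<le> l * \<Lambda> v + (1 - l) * \<Lambda> w"
proof -
  define u where "u = l * v + (1 - l) * s * w"
  define k where "k n = nat \<lfloor>l * real n\<rfloor>" for n :: nat
  define k' where "k' n = n - k n" for n :: nat
  define C where "C = v + w + 3"
  define X where "X n \<omega> = passage_time \<omega> (0, 0) (int (k n), \<lceil>v * k n\<rceil>) / n" for n \<omega>
  define Y where "Y n \<omega> = passage_time \<omega> (translate_reflect (k n) \<lceil>v * k n\<rceil> s (0, 0))
    (translate_reflect (k n) \<lceil>v * k n\<rceil> s (int (k' n), \<lceil>w * k' n\<rceil>)) / n" for n \<omega>
  define Z where "Z n \<omega> = passage_time \<omega> (0, 0) (int (k' n), \<lceil>w * k' n\<rceil>) / n" for n \<omega>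
  define W where "W n \<omega> = passage_time \<omega> (0, 0) (int n, \<lceil>u * n\<rceil>) / n - C / n" for n \<omega>
  have k_bounds: "real (k n) \<le> l * n" "l * n < real (k n) + 1" for n
    using nat_floor_bounds[of "l * n"] \<open>0 < l\<close> by (simp_all add: k_def)
  have k_split: "k n + k' n = n" for n
    using nat_floor_mult_le[of l n] \<open>0 < l\<close> \<open>l < 1\<close> by (simp add: k_def k'_def)
  have k_ratio: "(\<lambda>n. real (k n) / n) \<longlonglongrightarrow> l"
    unfolding k_def using \<open>0 < l\<close> by (intro tendsto_nat_floor_mult_div) simp
  have k'_ratio: "(\<lambda>n. real (k' n) / n) \<longlonglongrightarrow> 1 - l"
    unfolding k'_def k_def using \<open>0 < l\<close> \<open>l < 1\<close> by (intro tendsto_diff_nat_floor_mult_div) simp_all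
  have "\<Lambda> u \<le> \<Lambda> v * l + \<Lambda> w * (1 - l)"
  proof (rule env.limit_le_add_of_identically_distributed[of X Y Z W])
    show "\<And>n. X n \<in> borel_measurable env" "\<And>n. Y n \<in> borel_measurable env"
      "\<And>n. Z n \<in> borel_measurable env" "\<And>n. W n \<in> borel_measurable env"
      unfolding X_def Y_def Z_def W_def by measurable
    show "env.prob {\<omega> \<in> space env. t < Y n \<omega>} = env.prob {\<omega> \<in> space env. t < Z n \<omega>}" for n t
      unfolding Y_def Z_def by (rule prob_passage_time_translate_reflect[OF \<open>\<bar>s\<bar> = 1\<close>])
    show "AE \<omega> in env. \<forall>n. W n \<omega> \<le> X n \<omega> + Y n \<omega>"
      using AE_env_nonneg
    proof eventually_elim
      case (elim \<omega>)
      show ?case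
      proof
        fix n
        show "W n \<omega> \<le> X n \<omega> + Y n \<omega>"
          unfolding W_def X_def Y_def diff_divide_distrib[symmetric] add_divide_distrib[symmetric]
          using passage_time_split_bound[OF elim k_split[of n] k_bounds[of n] \<open>0 \<le> v\<close> \<open>0 \<le> w\<close> \<open>\<bar>s\<bar> = 1\<close>,
              folded u_def C_def]
          by (intro divide_right_mono) auto
      qed
    qed
    show "AE \<omega> in env. (\<lambda>n. X n \<omega>) \<longlonglongrightarrow> \<Lambda> v * l"
      unfolding X_def using time_constant_limit_reindex[OF \<open>0 \<le> v\<close> k_ratio \<open>0 < l\<close>] .
    show "AE \<omega> in env. (\<lambda>n. Z n \<omega>) \<longlonglongrightarrow> \<Lambda> w * (1 - l)"
      unfolding Z_def using time_constant_limit_reindex[OF \<open>0 \<le> w\<close> k'_ratio] \<open>l < 1\<close> by simp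
    show "AE \<omega> in env. (\<lambda>n. W n \<omega>) \<longlonglongrightarrow> \<Lambda> u"
      using time_constant_limit[OF u_nonneg[folded u_def]]
      by eventually_elim (use tendsto_diff[OF _ tendsto_mult_right_zero[OF lim_inverse_n', of C]] in
          \<open>simp add: W_def\<close>)
  qed
  then show ?thesis by (simp add: u_def mult.commute)
qed

lemma time_constant_convex_on: "convex_on {0..} \<Lambda>"
proof (rule convex_onI)
  fix t x y :: real assume "0 < t" "t < 1" "x \<in> {0..}" "y \<in> {0..}"
  then show "\<Lambda> ((1 - t) *\<^sub>R x + t *\<^sub>R y) \<le> (1 - t) * \<Lambda> x + t * \<Lambda> y"
    using time_constant_convex_combination[of x y 1 "1 - t"] by simp
qed simp

lemma time_constant_mono_on: "mono_on {0..} \<Lambda>"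
proof (rule mono_on_atLeast_if_convex_on[OF time_constant_convex_on])
  fix y :: real assume "0 \<le> y"
  then show "\<Lambda> 0 \<le> \<Lambda> y" using time_constant_convex_combination[of y y "-1" "1/2"] by simp
qed

end

theorem proposition2p6:
  fixes G :: "real measure" and \<Lambda> :: "real \<Rightarrow> real"
  assumes "prob_space G"
    and "sets G = sets borel"
    and "measure G {0..} = 1"
    and "\<And>v. v \<ge> 0 \<Longrightarrow>
           AE \<omega> in PiM UNIV (\<lambda>_::int \<times> int. G).
             (\<lambda>n. passage_time \<omega> (0, 0) (int n, \<lceil>v * real n\<rceil>) / real n) \<longlonglongrightarrow> \<Lambda> v"
    and "\<And>v. \<Lambda> (- v) = \<Lambda> v"
  shows "\<forall>v. \<bar>right_deriv \<Lambda> v\<bar> \<le> 1 \<and> \<bar>left_deriv \<Lambda> v\<bar> \<le> 1 \<and>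
             (v > 0 \<longrightarrow> right_deriv \<Lambda> v \<ge> 0 \<and> left_deriv \<Lambda> v \<ge> 0)"
proof -
  interpret time_constant G \<Lambda>
    using assms(1-4) by (simp add: time_constant_def time_constant_axioms_def iid_weights_def)
  have convex: "convex_on UNIV \<Lambda>"
    using convex_on_UNIV_if_even[OF assms(5) time_constant_convex_on time_constant_mono_on] .
  have lipschitz: "\<bar>\<Lambda> x - \<Lambda> y\<bar> \<le> 1 * \<bar>x - y\<bar>" for x y
    using abs_diff_le_if_even[OF assms(5) time_constant_le_add_dist] by simp
  show ?thesis
    using abs_right_deriv_le[OF convex lipschitz] abs_left_deriv_le[OF convex lipschitz]
      right_deriv_nonneg[OF convex time_constant_mono_on] left_deriv_nonneg[OF convex time_constant_mono_on]
    by (simp add: less_imp_le)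
qed

end
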